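(* Let $\Omega=\{\rho<0\}\subset\mathbb{C}^n$ be a bounded strongly convex domain with $C^3$ defining function $\rho$ and with $0\in\Omega$. There is $R=R(\Omega)>1$ such that for every $\xi\in\Omega_\varepsilon\setminus\Omega$ and every $z\in\Omega$, the number $\lambda=\frac{\langle\partial\rho(\xi),z\rangle}{\langle\partial\rho(\xi),\xi\rangle}$ lies in the domain $L(t)$ bounded by the bigger arc of the circle $|\lambda|=R$ and the chord $\{\lambda\in\mathbb{C}:\lambda=1+e^{it}s,\ s\in\mathbb{R},\ |\lambda|\le R\}$, where $t=\frac{\pi}{2}-\arg\langle\partial\rho(\xi),\xi\rangle$.
   Context: $\langle\partial\rho(\xi),w\rangle=\sum_k\frac{\partial\rho}{\partial\xi_k}(\xi)w_k$; $\varepsilon>0$ is fixed small so that $d^2\rho$ is positive definite on $\{|\rho|\le\varepsilon\}$, and $\Omega_\varepsilon=\{\rho<\varepsilon\}$. *)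

theory Defs
  imports "HOL-Analysis.Analysis"
begin

text \<open>Points of C^n are modelled as complex^'n; rho : C^n -> R is regarded as a
function of the 2n real variables (real Frechet derivatives).\<close>

definition D1 :: "(complex^'n \<Rightarrow> real) \<Rightarrow> complex^'n \<Rightarrow> complex^'n \<Rightarrow> real" where
  "D1 \<rho> x v = frechet_derivative \<rho> (at x) v"

definition D2 :: "(complex^'n \<Rightarrow> real) \<Rightarrow> complex^'n \<Rightarrow> complex^'n \<Rightarrow> complex^'n \<Rightarrow> real" where
  "D2 \<rho> x v w = frechet_derivative (\<lambda>y. D1 \<rho> y v) (at x) w"

definition D3 :: "(complex^'n \<Rightarrow> real) \<Rightarrow> complex^'n \<Rightarrow> complex^'n \<Rightarrow> complex^'n \<Rightarrow> complex^'n \<Rightarrow> real" where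
  "D3 \<rho> x v w u = frechet_derivative (\<lambda>y. D2 \<rho> y v w) (at x) u"

definition C3 :: "(complex^'n \<Rightarrow> real) \<Rightarrow> bool" where
  "C3 \<rho> \<longleftrightarrow> (\<forall>x. \<rho> differentiable (at x))
     \<and> (\<forall>v x. (\<lambda>y. D1 \<rho> y v) differentiable (at x))
     \<and> (\<forall>v w x. (\<lambda>y. D2 \<rho> y v w) differentiable (at x))
     \<and> (\<forall>v w u. continuous_on UNIV (\<lambda>x. D3 \<rho> x v w u))"

text \<open>Wirtinger derivative d rho / d xi_k = (d rho/d x_k - i d rho/d y_k)/2.\<close>
definition cpartial :: "(complex^'n \<Rightarrow> real) \<Rightarrow> complex^'n \<Rightarrow> 'n \<Rightarrow> complex" where
  "cpartial \<rho> \<xi> k = (complex_of_real (D1 \<rho> \<xi> (axis k 1)) - \<i> * complex_of_real (D1 \<rho> \<xi> (axis k \<i>))) / 2"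

text \<open>The pairing <d rho(xi), w> = sum_k d rho/d xi_k (xi) w_k (no conjugation).\<close>
definition dpair :: "(complex^'n \<Rightarrow> real) \<Rightarrow> complex^'n \<Rightarrow> complex^'n \<Rightarrow> complex" where
  "dpair \<rho> \<xi> w = (\<Sum>k\<in>UNIV. cpartial \<rho> \<xi> k * w $ k)"

text \<open>L(t) (depending on R): the open region of the disk |lambda| < R cut off by the chord
  {1 + e^{it} s : s real}, on the side of the bigger arc, i.e. on the same (strict) side of the
  chord line as the centre 0.  The signed side of lambda is Im (e^{-it} (lambda - 1)); the centre 0
  has side value Im(-e^{-it}) = sin t.\<close>
definition L_dom :: "real \<Rightarrow> real \<Rightarrow> complex set" where
  "L_dom R t = {w. cmod w < R \<and> Im (cnj (cis t) * (w - 1)) * sin t > 0}"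

end

theory Submission
  imports Defs
begin

text \<open>Strong convexity of \<rho> on \<open>\<partial>\<Omega>\<close> gives \<open>d\<^sup>2\<rho> \<ge> 0\<close> on a neighbourhood of the
  boundary.  Together with convexity of \<open>\<Omega>\<close> this puts \<open>\<Omega>\<close> into the open tangent half-space
  \<open>{z. d\<rho>(\<xi>)(z - \<xi>) < 0}\<close> for every \<open>\<xi>\<close> with \<open>0 \<le> \<rho>(\<xi>)\<close> small: along the segment from
  \<open>\<xi>\<close> to a point of \<open>\<Omega>\<close>, \<rho> would otherwise start non-decreasing and stay convex until it
  drops below the boundary, which it cannot do.  As \<open>d\<rho>(\<xi>) = 2 Re \<langle>\<partial>\<rho>(\<xi>), -\<rangle>\<close> and
  \<open>0 \<in> \<Omega>\<close>, this says \<open>Re \<langle>\<partial>\<rho>(\<xi>), z\<rangle> < Re \<langle>\<partial>\<rho>(\<xi>), \<xi>\<rangle>\<close>, where the right-hand side is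
  bounded below by a positive constant by compactness; that is, \<lambda> lies on the same side of the
  chord as 0.  Finally \<open>|\<langle>\<partial>\<rho>(\<xi>), z\<rangle>|\<close> is bounded on a compact set, which bounds \<open>|\<lambda>|\<close>.\<close>

lemma has_derivative_D1:
  assumes "C3 \<rho>"
  shows "(\<rho> has_derivative D1 \<rho> x) (at x)"
proof -
  have "\<rho> differentiable (at x)" using assms by (simp add: C3_def)
  then show ?thesis unfolding frechet_derivative_works D1_def[abs_def] .
qed

lemma has_derivative_D2:
  assumes "C3 \<rho>"
  shows "((\<lambda>y. D1 \<rho> y v) has_derivative D2 \<rho> x v) (at x)"
proof -
  have "(\<lambda>y. D1 \<rho> y v) differentiable (at x)" using assms by (simp add: C3_def)
  then show ?thesis unfolding frechet_derivative_works D2_def[abs_def] .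
qed

lemma linear_D1: "C3 \<rho> \<Longrightarrow> linear (D1 \<rho> x)"
  by (rule has_derivative_linear[OF has_derivative_D1])

lemma linear_D2: "C3 \<rho> \<Longrightarrow> linear (D2 \<rho> x v)"
  by (rule has_derivative_linear[OF has_derivative_D2])

lemma continuous_on_rho: "C3 \<rho> \<Longrightarrow> continuous_on S \<rho>"
  by (intro continuous_at_imp_continuous_on ballI has_derivative_continuous[OF has_derivative_D1])

lemma continuous_on_D1: "C3 \<rho> \<Longrightarrow> continuous_on S (\<lambda>x. D1 \<rho> x v)"
  by (intro continuous_at_imp_continuous_on ballI has_derivative_continuous[OF has_derivative_D2])

lemma continuous_on_D2:
  assumes "C3 \<rho>"
  shows "continuous_on S (\<lambda>x. D2 \<rho> x v w)"
proof -
  have "(\<lambda>y. D2 \<rho> y v w) differentiable (at x)" for x using assms by (simp add: C3_def)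
  then show ?thesis by (intro continuous_at_imp_continuous_on ballI differentiable_imp_continuous_within)
qed

lemma linear_eq_sum_Basis:
  fixes f :: "'a::euclidean_space \<Rightarrow> real"
  assumes "linear f"
  shows "f v = (\<Sum>b\<in>Basis. (v \<bullet> b) * f b)"
proof -
  have "f v = f (\<Sum>b\<in>Basis. (v \<bullet> b) *\<^sub>R b)" by (simp add: euclidean_representation)
  also have "\<dots> = (\<Sum>b\<in>Basis. (v \<bullet> b) * f b)"
    using assms by (simp add: linear_sum linear_scale)
  finally show ?thesis .
qed

lemma D2_eq_sum_Basis_left:
  assumes C: "C3 \<rho>"
  shows "D2 \<rho> x v w = (\<Sum>b\<in>Basis. (v \<bullet> b) * D2 \<rho> x b w)"
proof -
  have "(\<lambda>y. D1 \<rho> y v) = (\<lambda>y. \<Sum>b\<in>Basis. (v \<bullet> b) * D1 \<rho> y b)"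
    using linear_eq_sum_Basis[OF linear_D1[OF C]] by blast
  moreover have "((\<lambda>y. \<Sum>b\<in>Basis. (v \<bullet> b) * D1 \<rho> y b) has_derivative
      (\<lambda>w. \<Sum>b\<in>Basis. (v \<bullet> b) * D2 \<rho> x b w)) (at x)"
    by (intro has_derivative_sum has_derivative_mult_right has_derivative_D2[OF C])
  ultimately have "((\<lambda>y. D1 \<rho> y v) has_derivative
      (\<lambda>w. \<Sum>b\<in>Basis. (v \<bullet> b) * D2 \<rho> x b w)) (at x)"
    by simp
  from has_derivative_unique[OF has_derivative_D2[OF C] this] show ?thesis
    by (rule fun_cong)
qed

lemma D2_eq_double_sum_Basis:
  assumes C: "C3 \<rho>"
  shows "D2 \<rho> x v w = (\<Sum>b\<in>Basis. \<Sum>c\<in>Basis. (v \<bullet> b) * (w \<bullet> c) * D2 \<rho> x b c)"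
proof -
  have "D2 \<rho> x v w = (\<Sum>b\<in>Basis. (v \<bullet> b) * D2 \<rho> x b w)"
    by (rule D2_eq_sum_Basis_left[OF C])
  also have "\<dots> = (\<Sum>b\<in>Basis. (v \<bullet> b) * (\<Sum>c\<in>Basis. (w \<bullet> c) * D2 \<rho> x b c))"
    by (intro sum.cong refl arg_cong2[where f=times] linear_eq_sum_Basis[OF linear_D2[OF C]])
  finally show ?thesis by (simp add: sum_distrib_left mult.assoc)
qed

lemma D2_scaleR_diag:
  assumes C: "C3 \<rho>"
  shows "D2 \<rho> x (c *\<^sub>R v) (c *\<^sub>R v) = c\<^sup>2 * D2 \<rho> x v v"
proof -
  have "D2 \<rho> x (c *\<^sub>R v) (c *\<^sub>R v)
      = (\<Sum>b\<in>Basis. \<Sum>d\<in>Basis. c\<^sup>2 * ((v \<bullet> b) * (v \<bullet> d) * D2 \<rho> x b d))"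
    by (subst D2_eq_double_sum_Basis[OF C]) (simp add: power2_eq_square mult_ac)
  also have "\<dots> = c\<^sup>2 * D2 \<rho> x v v"
    by (subst (2) D2_eq_double_sum_Basis[OF C]) (simp add: sum_distrib_left)
  finally show ?thesis .
qed

lemma continuous_on_D1_diag:
  assumes C: "C3 \<rho>"
  shows "continuous_on S (\<lambda>x. D1 \<rho> x x)"
proof -
  have "continuous_on S (\<lambda>x. \<Sum>b\<in>Basis. (x \<bullet> b) * D1 \<rho> x b)"
    by (intro continuous_on_sum continuous_on_mult continuous_on_inner continuous_on_id
        continuous_on_const continuous_on_D1[OF C])
  moreover have "(\<lambda>x. \<Sum>b\<in>Basis. (x \<bullet> b) * D1 \<rho> x b) = (\<lambda>x. D1 \<rho> x x)"
    by (rule ext) (rule linear_eq_sum_Basis[OF linear_D1[OF C], symmetric])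
  ultimately show ?thesis by (metis (no_types))
qed

lemma continuous_on_D2_diag:
  assumes C: "C3 \<rho>"
  shows "continuous_on S (\<lambda>p. D2 \<rho> (fst p) (snd p) (snd p))"
proof -
  have "continuous_on S (\<lambda>p. D2 \<rho> (fst p) b c)" for b c
    by (rule continuous_on_compose2[OF continuous_on_D2[OF C, of UNIV] continuous_on_fst[OF continuous_on_id]]) auto
  then have "continuous_on S (\<lambda>p. \<Sum>b\<in>Basis. \<Sum>c\<in>Basis. (snd p \<bullet> b) * (snd p \<bullet> c) * D2 \<rho> (fst p) b c)"
    by (intro continuous_on_sum continuous_on_mult continuous_on_inner continuous_on_snd continuous_on_id continuous_on_const)
  then show ?thesis by (subst D2_eq_double_sum_Basis[OF C])
qed

lemma continuous_on_dpair:
  assumes C: "C3 \<rho>"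
  shows "continuous_on S (\<lambda>p. dpair \<rho> (fst p) (snd p))"
proof -
  have "continuous_on S (\<lambda>p. D1 \<rho> (fst p) v)" for v
    by (rule continuous_on_compose2[OF continuous_on_D1[OF C, of UNIV] continuous_on_fst[OF continuous_on_id]]) auto
  then show ?thesis
    unfolding dpair_def cpartial_def
    by (intro continuous_on_sum continuous_on_mult continuous_on_divide continuous_on_diff
        continuous_on_of_real continuous_on_const continuous_on_component continuous_on_snd continuous_on_id) auto
qed

lemma has_real_derivative_along_line:
  assumes "(f has_derivative f') (at (x + s *\<^sub>R d))" "linear f'"
  shows "((\<lambda>s. f (x + s *\<^sub>R d)) has_real_derivative f' d) (at s)"
proof -
  have "((\<lambda>s. x + s *\<^sub>R d) has_derivative (\<lambda>t. t *\<^sub>R d)) (at s)"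
    by (auto intro!: derivative_eq_intros)
  from has_derivative_compose[OF this assms(1)]
  have "((\<lambda>s. f (x + s *\<^sub>R d)) has_derivative (\<lambda>t. f' (t *\<^sub>R d))) (at s)" .
  moreover have "(\<lambda>t. f' (t *\<^sub>R d)) = (*) (f' d)"
    using assms(2) by (auto simp: linear_scale)
  ultimately show ?thesis by (simp add: has_field_derivative_def)
qed

lemma compact_Int_sublevel:
  fixes f :: "'a::t2_space \<Rightarrow> real"
  assumes "compact K" "continuous_on K f"
  shows "compact (K \<inter> {x. f x \<le> a})"
proof -
  have "closed (K \<inter> f -` {..a})"
    by (rule continuous_closed_preimage[OF assms(2) compact_imp_closed[OF assms(1)]]) simp
  then have "compact (K \<inter> (K \<inter> f -` {..a}))" by (rule compact_Int_closed[OF assms(1)])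
  then show ?thesis by (simp add: vimage_def Int_def)
qed

lemma compact_pos_lower_bound:
  fixes F :: "'a::topological_space \<Rightarrow> real"
  assumes "compact K" "continuous_on K F" "\<forall>x\<in>K. 0 < F x"
  shows "\<exists>m>0. \<forall>x\<in>K. m \<le> F x"
proof (cases "K = {}")
  case True
  then show ?thesis by (intro exI[of _ 1]) auto
next
  case False
  from continuous_attains_inf[OF assms(1) False assms(2)] assms(3) show ?thesis by blast
qed

lemma compact_pos_near_zero_set:
  fixes f F :: "'a::t2_space \<Rightarrow> real"
  assumes K: "compact K" and f: "continuous_on K f" and F: "continuous_on K F"
    and nonneg: "\<forall>x\<in>K. 0 \<le> f x" and pos: "\<forall>x\<in>K. f x = 0 \<longrightarrow> 0 < F x"
  shows "\<exists>\<eta>>0. \<forall>x\<in>K. f x < \<eta> \<longrightarrow> 0 < F x"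
proof -
  let ?C = "K \<inter> {x. F x \<le> 0}"
  have "compact ?C" by (rule compact_Int_sublevel[OF K F])
  moreover have "continuous_on ?C f" by (rule continuous_on_subset[OF f]) auto
  moreover have "\<forall>x\<in>?C. 0 < f x" using nonneg pos by force
  ultimately obtain \<eta> where "\<eta> > 0" "\<forall>x\<in>?C. \<eta> \<le> f x"
    using compact_pos_lower_bound by blast
  then show ?thesis by (metis (mono_tags, lifting) IntI mem_Collect_eq not_le)
qed

lemma compact_uniformly_pos_near_zero_set:
  fixes f F :: "'a::t2_space \<Rightarrow> real"
  assumes K: "compact K" and f: "continuous_on K f" and F: "continuous_on K F"
    and nonneg: "\<forall>x\<in>K. 0 \<le> f x" and pos: "\<forall>x\<in>K. f x = 0 \<longrightarrow> 0 < F x"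
  shows "\<exists>\<eta>>0. \<exists>m>0. \<forall>x\<in>K. f x < \<eta> \<longrightarrow> m \<le> F x"
proof -
  obtain \<eta> where \<eta>: "\<eta> > 0" "\<forall>x\<in>K. f x < \<eta> \<longrightarrow> 0 < F x"
    using compact_pos_near_zero_set[OF assms] by blast
  let ?C = "K \<inter> {x. f x \<le> \<eta>/2}"
  have "compact ?C" by (rule compact_Int_sublevel[OF K f])
  moreover have "continuous_on ?C F" by (rule continuous_on_subset[OF F]) auto
  moreover have "\<forall>x\<in>?C. 0 < F x" using \<eta> by auto
  ultimately obtain m where "m > 0" "\<forall>x\<in>?C. m \<le> F x"
    using compact_pos_lower_bound by blast
  then show ?thesis using \<eta>(1) by (intro exI[of _ "\<eta>/2"] conjI exI[of _ m]) auto
qed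

lemma nondecreasing_if_convex_above_level:
  fixes g g' g'' :: "real \<Rightarrow> real"
  assumes g': "\<And>s. (g has_real_derivative g' s) (at s)"
    and g'': "\<And>s. (g' has_real_derivative g'' s) (at s)"
    and start: "0 \<le> g' 0" "l < g 0"
    and convex_above: "\<And>s. 0 \<le> s \<Longrightarrow> s \<le> 1 \<Longrightarrow> l < g s \<Longrightarrow> 0 \<le> g'' s"
  shows "g 0 \<le> g 1"
proof (rule ccontr)
  assume "\<not> g 0 \<le> g 1"
  have up_to: "g 0 \<le> g s1" if s1: "0 \<le> s1" "s1 \<le> 1" and above: "\<forall>s. 0 \<le> s \<and> s \<le> s1 \<longrightarrow> l < g s"
    for s1
  proof -
    have "g' 0 \<le> g' s" if "0 \<le> s" "s \<le> s1" for s
      using that s1 above g'' convex_above by (intro DERIV_nonneg_imp_nondecreasing[OF that(1)]) force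
    then show ?thesis
      using s1 g' start(1) by (intro DERIV_nonneg_imp_nondecreasing[OF s1(1)]) (meson order_trans)
  qed
  \<comment> \<open>Let \<open>s0\<close> be the first time \<open>g\<close> drops to a level \<open>m\<close> between \<open>l\<close> and \<open>g 0\<close>.
    Up to \<open>s0\<close>, \<open>g\<close> stays above \<open>l\<close>, hence is convex and non-decreasing: \<open>g s0 \<ge> g 0 > m\<close>.\<close>
  define m where "m = max (g 1) ((l + g 0) / 2)"
  have m: "l < m" "m < g 0" "g 1 \<le> m"
    unfolding m_def using start(2) \<open>\<not> g 0 \<le> g 1\<close>
    by (simp_all add: less_max_iff_disj)
  have cont: "continuous_on A g" for A
    using g' by (intro continuous_at_imp_continuous_on ballI) (auto intro: DERIV_isCont)
  define S where "S = {s \<in> {0..1}. g s \<le> m}"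
  have "closed S" unfolding S_def
    using continuous_closed_preimage[OF cont closed_atLeastAtMost closed_atMost, of 0 1 m]
    by (simp add: vimage_def Int_def)
  moreover have "1 \<in> S" using m by (simp add: S_def)
  moreover have S_below: "bdd_below S" by (auto simp: S_def bdd_below_def)
  ultimately have "Inf S \<in> S" by (intro closed_contains_Inf) auto
  define s0 where "s0 = Inf S"
  have s0: "0 \<le> s0" "s0 \<le> 1" "g s0 \<le> m" using \<open>Inf S \<in> S\<close> by (auto simp: S_def s0_def)
  have first: "s0 \<le> s" if "s \<in> S" for s unfolding s0_def by (rule cInf_lower[OF that S_below])
  obtain x where x: "0 \<le> x" "x \<le> s0" "g x = m"
    using IVT2'[OF s0(3) _ s0(1) cont] m(2) by force
  then have "x = s0" using first[of x] s0 by (auto simp: S_def)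
  have "\<forall>s. 0 \<le> s \<and> s \<le> s0 \<longrightarrow> l < g s"
  proof (intro allI impI)
    fix s assume s: "0 \<le> s \<and> s \<le> s0"
    show "l < g s"
    proof (cases "s = s0")
      case True
      then show ?thesis using x \<open>x = s0\<close> m(1) by simp
    next
      case False
      then have "s \<notin> S" using first s by force
      then show ?thesis using s s0 m(1) by (auto simp: S_def)
    qed
  qed
  from up_to[OF s0(1,2) this] show False using s0(3) m(2) by simp
qed

lemma uniformly_pos_near_zero_level:
  fixes \<rho> F :: "'a::t2_space \<Rightarrow> real"
  assumes \<rho>: "continuous_on UNIV \<rho>" and F: "continuous_on UNIV F"
    and c: "0 < c" "compact {x. \<rho> x \<le> c}" and pos: "\<And>x. \<rho> x = 0 \<Longrightarrow> 0 < F x"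
  shows "\<exists>\<eta>>0. \<exists>m>0. \<forall>x. 0 \<le> \<rho> x \<longrightarrow> \<rho> x < \<eta> \<longrightarrow> m \<le> F x"
proof -
  let ?K = "{x. \<rho> x \<le> c} \<inter> {x. - \<rho> x \<le> 0}"
  have "compact ?K"
    by (rule compact_Int_sublevel[OF c(2) continuous_on_minus[OF continuous_on_subset[OF \<rho> subset_UNIV]]])
  moreover have "continuous_on ?K \<rho>" "continuous_on ?K F"
    using continuous_on_subset[OF \<rho> subset_UNIV] continuous_on_subset[OF F subset_UNIV] by blast+
  moreover have "\<forall>x\<in>?K. 0 \<le> \<rho> x" "\<forall>x\<in>?K. \<rho> x = 0 \<longrightarrow> 0 < F x" using pos by auto
  ultimately obtain \<eta> m where \<eta>: "0 < \<eta>" "0 < m" "\<forall>x\<in>?K. \<rho> x < \<eta> \<longrightarrow> m \<le> F x"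
    using compact_uniformly_pos_near_zero_set by blast
  show ?thesis
    using \<eta> c(1) by (intro exI[of _ "min \<eta> c"] conjI exI[of _ m]) auto
qed

lemma closure_domain_subset:
  fixes \<rho> :: "'a::topological_space \<Rightarrow> real"
  assumes "continuous_on UNIV \<rho>"
  shows "closure {z. \<rho> z < 0} \<subseteq> {z. \<rho> z \<le> 0}"
  by (rule closure_minimal) (auto intro: closed_Collect_le[OF assms continuous_on_const])

lemma zero_level_in_closure:
  assumes C: "C3 \<rho>" and zero: "\<rho> x = 0" and nonsingular: "D1 \<rho> x \<noteq> (\<lambda>_. 0)"
  shows "x \<in> closure {z. \<rho> z < 0}"
proof -
  obtain v0 where "D1 \<rho> x v0 \<noteq> 0" using nonsingular by auto
  then have "D1 \<rho> x v0 < 0 \<or> D1 \<rho> x (- v0) < 0"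
    by (auto simp: linear_neg[OF linear_D1[OF C]])
  then obtain v where v: "D1 \<rho> x v < 0" by blast
  have "((\<lambda>h. \<rho> (x + h *\<^sub>R v)) has_real_derivative D1 \<rho> x v) (at 0)"
    using has_real_derivative_along_line[OF has_derivative_D1[OF C] linear_D1[OF C], where s=0 and d=v] by simp
  from DERIV_neg_dec_right[OF this v] obtain d where "0 < d" "\<forall>h>0. h < d \<longrightarrow> \<rho> (x + h *\<^sub>R v) < 0"
    using zero by auto
  then have "\<forall>\<^sub>F h in at_right 0. \<rho> (x + h *\<^sub>R v) < 0"
    unfolding eventually_at_right_field by blast
  then have "\<forall>\<^sub>F h in at_right 0. x + h *\<^sub>R v \<in> closure {z. \<rho> z < 0}"
    by (rule eventually_mono) (simp add: closure_def)
  moreover have "((\<lambda>h. x + h *\<^sub>R v) \<longlongrightarrow> x + 0 *\<^sub>R v) (at_right 0)"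
    by (intro tendsto_intros)
  then have "((\<lambda>h. x + h *\<^sub>R v) \<longlongrightarrow> x) (at_right 0)" by simp
  ultimately show ?thesis
    by (rule Lim_in_closed_set[OF closed_closure _ trivial_limit_at_right_real])
qed

lemma D2_diag_nonneg_if_pos_on_sphere:
  assumes C: "C3 \<rho>" and sphere: "\<And>u. norm u = 1 \<Longrightarrow> 0 < D2 \<rho> x u u"
  shows "0 \<le> D2 \<rho> x v v"
proof (cases "v = 0")
  case True
  then show ?thesis using D2_scaleR_diag[OF C, of x 0 v] by simp
next
  case False
  then have "D2 \<rho> x v v = (norm v)\<^sup>2 * D2 \<rho> x (v /\<^sub>R norm v) (v /\<^sub>R norm v)"
    using D2_scaleR_diag[OF C, of x "norm v" "v /\<^sub>R norm v"] by simp
  then show ?thesis using sphere[of "v /\<^sub>R norm v"] False by simp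
qed

lemma D2_nonneg_near_boundary:
  fixes \<rho> :: "complex^'n \<Rightarrow> real"
  assumes C: "C3 \<rho>" and bounded: "bounded {z. \<rho> z < 0}" and nonempty: "{z. \<rho> z < 0} \<noteq> {}"
    and strongly_convex: "\<forall>x. \<rho> x = 0 \<longrightarrow> (\<forall>v. v \<noteq> 0 \<longrightarrow> D2 \<rho> x v v > 0)"
  shows "\<exists>\<delta>>0. \<forall>x q u. \<rho> q < 0 \<longrightarrow> dist x q < \<delta> \<longrightarrow> -\<delta> < \<rho> x \<longrightarrow> 0 \<le> D2 \<rho> x u u"
proof -
  define \<Omega> where "\<Omega> = {z. \<rho> z < 0}"
  obtain B where B: "\<forall>z\<in>\<Omega>. norm z \<le> B" using bounded by (auto simp: \<Omega>_def bounded_iff)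
  define K where "K = cball (0::complex^'n) (B + 1) \<times> sphere (0::complex^'n) 1"
  define f where "f p = infdist (fst p) \<Omega> + max 0 (- \<rho> (fst p))" for p :: "(complex^'n) \<times> (complex^'n)"
  have "\<exists>\<eta>>0. \<forall>p\<in>K. f p < \<eta> \<longrightarrow> 0 < D2 \<rho> (fst p) (snd p) (snd p)"
  proof (rule compact_pos_near_zero_set)
    show "compact K" unfolding K_def by (intro compact_Times compact_cball compact_sphere)
    show "continuous_on K f" unfolding f_def
      by (intro continuous_intros continuous_on_infdist
          continuous_on_compose2[OF continuous_on_rho[OF C, of UNIV] continuous_on_fst]) auto
    show "continuous_on K (\<lambda>p. D2 \<rho> (fst p) (snd p) (snd p))" by (rule continuous_on_D2_diag[OF C])
    show "\<forall>p\<in>K. 0 \<le> f p" by (auto simp: f_def intro: add_nonneg_nonneg infdist_nonneg)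
    show "\<forall>p\<in>K. f p = 0 \<longrightarrow> 0 < D2 \<rho> (fst p) (snd p) (snd p)"
    proof (intro ballI impI)
      fix p assume p: "p \<in> K" "f p = 0"
      then have "infdist (fst p) \<Omega> = 0" "0 \<le> \<rho> (fst p)"
        using infdist_nonneg[of "fst p" \<Omega>] unfolding f_def by linarith+
      then have "\<rho> (fst p) = 0"
        using closure_domain_subset[OF continuous_on_rho[OF C]] in_closure_iff_infdist_zero[of \<Omega>]
          nonempty by (force simp: \<Omega>_def)
      moreover have "snd p \<noteq> 0" using p(1) by (auto simp: K_def)
      ultimately show "0 < D2 \<rho> (fst p) (snd p) (snd p)" using strongly_convex by simp
    qed
  qed
  then obtain \<eta> where \<eta>: "0 < \<eta>" "\<forall>p\<in>K. f p < \<eta> \<longrightarrow> 0 < D2 \<rho> (fst p) (snd p) (snd p)" by blast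
  show ?thesis
  proof (intro exI[of _ "min (\<eta>/2) 1"] conjI allI impI)
    show "0 < min (\<eta>/2) 1" using \<eta> by simp
    fix x q u assume q: "\<rho> q < 0" and xq: "dist x q < min (\<eta>/2) 1" and x: "- min (\<eta>/2) 1 < \<rho> x"
    have norm_x: "norm x \<le> B + 1"
      using B q xq norm_triangle_ineq2[of x q] by (auto simp: \<Omega>_def dist_norm)
    have "infdist x \<Omega> < \<eta>/2"
      using infdist_le[of q \<Omega> x] q xq by (simp add: \<Omega>_def)
    moreover have "max 0 (- \<rho> x) < \<eta>/2"
      using x \<eta>(1) min.cobounded1[of "\<eta>/2" 1] by simp
    ultimately have "f (x, w) < \<eta>" for w by (simp add: f_def)
    then show "0 \<le> D2 \<rho> x u u"
      using \<eta>(2) norm_x by (intro D2_diag_nonneg_if_pos_on_sphere[OF C]) (auto simp: K_def)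
  qed
qed

lemma domain_in_tangent_halfspace:
  fixes \<rho> :: "complex^'n \<Rightarrow> real"
  assumes C: "C3 \<rho>" and convex: "convex {z. \<rho> z < 0}"
    and locally_convex: "\<forall>x q u. \<rho> q < 0 \<longrightarrow> dist x q < \<delta> \<longrightarrow> -\<delta> < \<rho> x \<longrightarrow> 0 \<le> D2 \<rho> x u u"
    and \<xi>: "0 \<le> \<rho> \<xi>" and q: "\<rho> q < 0" "dist \<xi> q < \<delta>" and z: "\<rho> z < 0"
  shows "D1 \<rho> \<xi> (z - \<xi>) < 0"
proof (rule ccontr)
  assume "\<not> D1 \<rho> \<xi> (z - \<xi>) < 0"
  have "0 < \<delta>" using q(2) zero_le_dist[of \<xi> q] by linarith
  define d where "d = z - \<xi>"
  have near: "\<exists>q'. \<rho> q' < 0 \<and> dist (\<xi> + s *\<^sub>R d) q' < \<delta>" if s: "0 \<le> s" "s \<le> 1" for s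
  proof (intro exI conjI)
    have "(1 - s) *\<^sub>R q + s *\<^sub>R z \<in> {z. \<rho> z < 0}"
      using s q z by (intro convexD[OF convex]) auto
    then show "\<rho> (q + s *\<^sub>R (z - q)) < 0" by (simp add: algebra_simps)
    have "\<xi> + s *\<^sub>R d - (q + s *\<^sub>R (z - q)) = (1 - s) *\<^sub>R (\<xi> - q)"
      by (simp add: d_def algebra_simps)
    then have "dist (\<xi> + s *\<^sub>R d) (q + s *\<^sub>R (z - q)) = (1 - s) * dist \<xi> q"
      using s by (simp add: dist_norm)
    also have "\<dots> \<le> dist \<xi> q" using s by (simp add: mult_left_le_one_le)
    finally show "dist (\<xi> + s *\<^sub>R d) (q + s *\<^sub>R (z - q)) < \<delta>" using q by linarith
  qed
  have "\<rho> (\<xi> + 0 *\<^sub>R d) \<le> \<rho> (\<xi> + 1 *\<^sub>R d)"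
  proof (rule nondecreasing_if_convex_above_level[where g = "\<lambda>s. \<rho> (\<xi> + s *\<^sub>R d)"
        and g' = "\<lambda>s. D1 \<rho> (\<xi> + s *\<^sub>R d) d" and g'' = "\<lambda>s. D2 \<rho> (\<xi> + s *\<^sub>R d) d d" and l = "-\<delta>"])
    show "((\<lambda>s. \<rho> (\<xi> + s *\<^sub>R d)) has_real_derivative D1 \<rho> (\<xi> + s *\<^sub>R d) d) (at s)" for s
      by (rule has_real_derivative_along_line[OF has_derivative_D1[OF C] linear_D1[OF C]])
    show "((\<lambda>s. D1 \<rho> (\<xi> + s *\<^sub>R d) d) has_real_derivative D2 \<rho> (\<xi> + s *\<^sub>R d) d d) (at s)" for s
      by (rule has_real_derivative_along_line[OF has_derivative_D2[OF C] linear_D2[OF C]])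
    show "0 \<le> D1 \<rho> (\<xi> + 0 *\<^sub>R d) d" using \<open>\<not> D1 \<rho> \<xi> (z - \<xi>) < 0\<close> by (simp add: d_def)
    show "- \<delta> < \<rho> (\<xi> + 0 *\<^sub>R d)" using \<xi> \<open>0 < \<delta>\<close> by simp
    show "0 \<le> D2 \<rho> (\<xi> + s *\<^sub>R d) d d" if "0 \<le> s" "s \<le> 1" "- \<delta> < \<rho> (\<xi> + s *\<^sub>R d)" for s
      using near[OF that(1,2)] that(3) locally_convex by blast
  qed
  then show False using \<xi> z by (simp add: d_def)
qed

lemma domain_in_tangent_halfspace_near_boundary:
  fixes \<rho> :: "complex^'n \<Rightarrow> real"
  assumes C: "C3 \<rho>" and bounded: "bounded {z. \<rho> z < 0}" and convex: "convex {z. \<rho> z < 0}"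
    and zero_in: "\<rho> 0 < 0" and defining: "\<forall>x. \<rho> x = 0 \<longrightarrow> D1 \<rho> x \<noteq> (\<lambda>_. 0)"
    and strongly_convex: "\<forall>x. \<rho> x = 0 \<longrightarrow> (\<forall>v. v \<noteq> 0 \<longrightarrow> D2 \<rho> x v v > 0)"
    and sublevel: "0 < c" "compact {z. \<rho> z \<le> c}"
  shows "\<exists>\<eta>>0. \<forall>\<xi> z. 0 \<le> \<rho> \<xi> \<longrightarrow> \<rho> \<xi> < \<eta> \<longrightarrow> \<rho> z < 0 \<longrightarrow> D1 \<rho> \<xi> (z - \<xi>) < 0"
proof -
  define \<Omega> where "\<Omega> = {z. \<rho> z < 0}"
  have nonempty: "\<Omega> \<noteq> {}" using zero_in by (auto simp: \<Omega>_def)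
  obtain \<delta> where \<delta>: "0 < \<delta>"
    and locally_convex: "\<forall>x q u. \<rho> q < 0 \<longrightarrow> dist x q < \<delta> \<longrightarrow> -\<delta> < \<rho> x \<longrightarrow> 0 \<le> D2 \<rho> x u u"
    using D2_nonneg_near_boundary[OF C bounded _ strongly_convex] nonempty by (auto simp: \<Omega>_def)
  have "\<exists>\<eta>>0. \<exists>m>0. \<forall>x. 0 \<le> \<rho> x \<longrightarrow> \<rho> x < \<eta> \<longrightarrow> m \<le> \<delta> - infdist x \<Omega>"
  proof (rule uniformly_pos_near_zero_level[OF continuous_on_rho[OF C] _ sublevel])
    show "continuous_on UNIV (\<lambda>x. \<delta> - infdist x \<Omega>)" by (intro continuous_intros)
    show "0 < \<delta> - infdist x \<Omega>" if "\<rho> x = 0" for x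
      using zero_level_in_closure[OF C that] defining that in_closure_iff_infdist_zero[OF nonempty] \<delta>
      by (auto simp: \<Omega>_def)
  qed
  then obtain \<eta> where \<eta>: "0 < \<eta>" "\<forall>x. 0 \<le> \<rho> x \<longrightarrow> \<rho> x < \<eta> \<longrightarrow> infdist x \<Omega> < \<delta>"
    by (metis diff_gt_0_iff_gt order_less_le_trans)
  show ?thesis
  proof (intro exI[of _ \<eta>] conjI allI impI)
    show "0 < \<eta>" by (rule \<eta>(1))
    fix \<xi> z assume \<xi>: "0 \<le> \<rho> \<xi>" "\<rho> \<xi> < \<eta>" and z: "\<rho> z < 0"
    have "infdist \<xi> \<Omega> < \<delta>" using \<eta>(2) \<xi> by blast
    then obtain q where "q \<in> \<Omega>" "dist \<xi> q < \<delta>"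
      unfolding infdist_notempty[OF nonempty]
      by (subst (asm) cINF_less_iff[OF nonempty]) (auto intro: bdd_belowI[of _ 0])
    then show "D1 \<rho> \<xi> (z - \<xi>) < 0"
      using domain_in_tangent_halfspace[OF C convex locally_convex \<xi>(1) _ _ z] by (auto simp: \<Omega>_def)
  qed
qed

lemma D1_diag_uniformly_pos_near_boundary:
  fixes \<rho> :: "complex^'n \<Rightarrow> real"
  assumes C: "C3 \<rho>" and zero_in: "\<rho> 0 < 0" and sublevel: "0 < c" "compact {z. \<rho> z \<le> c}"
    and "0 < \<eta>"
    and halfspace: "\<forall>\<xi> z. 0 \<le> \<rho> \<xi> \<longrightarrow> \<rho> \<xi> < \<eta> \<longrightarrow> \<rho> z < 0 \<longrightarrow> D1 \<rho> \<xi> (z - \<xi>) < 0"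
  shows "\<exists>\<eta>'>0. \<exists>m>0. \<forall>\<xi>. 0 \<le> \<rho> \<xi> \<longrightarrow> \<rho> \<xi> < \<eta>' \<longrightarrow> m \<le> D1 \<rho> \<xi> \<xi>"
proof (rule uniformly_pos_near_zero_level[OF continuous_on_rho[OF C] continuous_on_D1_diag[OF C] sublevel])
  fix x assume "\<rho> x = 0"
  then have "D1 \<rho> x (0 - x) < 0"
    by (intro halfspace[rule_format]) (use \<open>0 < \<eta>\<close> zero_in in auto)
  then show "0 < D1 \<rho> x x" by (simp add: linear_neg[OF linear_D1[OF C]])
qed

lemma Re_dpair:
  assumes C: "C3 \<rho>"
  shows "Re (dpair \<rho> \<xi> v) = D1 \<rho> \<xi> v / 2"
proof -
  have lin: "linear (D1 \<rho> \<xi>)" by (rule linear_D1[OF C])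
  have v: "v = (\<Sum>k\<in>UNIV. Re (v $ k) *\<^sub>R axis k 1 + Im (v $ k) *\<^sub>R axis k \<i>)"
  proof (subst vec_eq_iff, intro allI)
    fix j
    have "(\<Sum>k\<in>UNIV. Re (v $ k) *\<^sub>R axis k 1 + Im (v $ k) *\<^sub>R axis k \<i>) $ j
        = (\<Sum>k\<in>UNIV. Re (v $ k) *\<^sub>R (axis k 1 $ j) + Im (v $ k) *\<^sub>R (axis k \<i> $ j))"
      by (simp add: sum_component)
    also have "\<dots> = (\<Sum>k\<in>UNIV. (if k = j then Re (v $ j) *\<^sub>R 1 + Im (v $ j) *\<^sub>R \<i> else 0))"
      by (intro sum.cong refl) (auto simp: axis_def)
    also have "\<dots> = v $ j" by (simp add: complex_eq_iff)
    finally show "v $ j = (\<Sum>k\<in>UNIV. Re (v $ k) *\<^sub>R axis k 1 + Im (v $ k) *\<^sub>R axis k \<i>) $ j" by simp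
  qed
  have "D1 \<rho> \<xi> v
      = (\<Sum>k\<in>UNIV. Re (v $ k) * D1 \<rho> \<xi> (axis k 1) + Im (v $ k) * D1 \<rho> \<xi> (axis k \<i>))"
    by (subst v) (simp add: linear_sum[OF lin] linear_add[OF lin] linear_scale[OF lin])
  moreover have "Re (dpair \<rho> \<xi> v)
      = (\<Sum>k\<in>UNIV. Re (v $ k) * D1 \<rho> \<xi> (axis k 1) + Im (v $ k) * D1 \<rho> \<xi> (axis k \<i>)) / 2"
    by (simp add: dpair_def cpartial_def Re_sum sum_divide_distrib algebra_simps)
  ultimately show ?thesis by simp
qed

text \<open>The chord of \<open>L_dom R (pi / 2 - Arg a)\<close> is the line \<open>{\<lambda>. Re (\<lambda> * a) = Re a}\<close>, and 0 lies
  on the side \<open>Re (\<lambda> * a) < Re a\<close>.\<close>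

lemma quotient_mem_L_dom:
  assumes pos: "0 < Re a" and below: "Re b < Re a" and norm: "cmod (b / a) < R"
  shows "b / a \<in> L_dom R (pi / 2 - Arg a)"
proof -
  have a: "a \<noteq> 0" using pos by auto
  then have r: "0 < cmod a" by simp
  have cos: "cos (pi/2 - Arg a) = Im a / cmod a" using a by (simp add: cos_diff sin_Arg)
  have sin: "sin (pi/2 - Arg a) = Re a / cmod a" using a by (simp add: sin_diff cos_Arg)
  have "cnj (cis (pi/2 - Arg a)) = - \<i> * a / complex_of_real (cmod a)"
    using r by (simp add: complex_eq_iff cos sin)
  then have "cnj (cis (pi/2 - Arg a)) * (b / a - 1) = - \<i> * (b - a) / complex_of_real (cmod a)"
    using a r by (simp add: field_simps)
  moreover have "Im (- \<i> * (b - a) / complex_of_real (cmod a)) = (Re a - Re b) / cmod a"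
    by (simp add: Im_divide_of_real) (simp add: minus_divide_left)
  ultimately have "Im (cnj (cis (pi/2 - Arg a)) * (b / a - 1)) * sin (pi/2 - Arg a)
      = (Re a - Re b) * Re a / (cmod a)\<^sup>2"
    by (simp add: sin power2_eq_square)
  moreover have "0 < (Re a - Re b) * Re a / (cmod a)\<^sup>2" using pos below a by simp
  ultimately show ?thesis using norm by (simp add: L_dom_def)
qed

lemma dpair_bounded_on_compact:
  assumes C: "C3 \<rho>" and K: "compact K"
  shows "\<exists>M. \<forall>\<xi>\<in>K. \<forall>z\<in>K. cmod (dpair \<rho> \<xi> z) \<le> M"
proof -
  have "compact ((\<lambda>p. dpair \<rho> (fst p) (snd p)) ` (K \<times> K))"
    by (intro compact_continuous_image continuous_on_dpair[OF C] compact_Times K)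
  then obtain M where "\<forall>w\<in>(\<lambda>p. dpair \<rho> (fst p) (snd p)) ` (K \<times> K). cmod w \<le> M"
    using compact_imp_bounded bounded_iff by blast
  then show ?thesis by auto
qed

lemma dpair_quotient_mem_L_dom:
  assumes C: "C3 \<rho>" and halfspace: "D1 \<rho> \<xi> (z - \<xi>) < 0"
    and lower: "0 < m" "m \<le> D1 \<rho> \<xi> \<xi>" and upper: "cmod (dpair \<rho> \<xi> z) \<le> M"
    and R: "2 * M / m < R"
  shows "dpair \<rho> \<xi> z / dpair \<rho> \<xi> \<xi> \<in> L_dom R (pi / 2 - Arg (dpair \<rho> \<xi> \<xi>))"
proof (rule quotient_mem_L_dom)
  have Re_a: "m / 2 \<le> Re (dpair \<rho> \<xi> \<xi>)" using lower(2) Re_dpair[OF C] by simp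
  then show "0 < Re (dpair \<rho> \<xi> \<xi>)" using lower(1) by linarith
  show "Re (dpair \<rho> \<xi> z) < Re (dpair \<rho> \<xi> \<xi>)"
    using halfspace by (simp add: Re_dpair[OF C] linear_diff[OF linear_D1[OF C]])
  have "cmod (dpair \<rho> \<xi> z / dpair \<rho> \<xi> \<xi>) = cmod (dpair \<rho> \<xi> z) / cmod (dpair \<rho> \<xi> \<xi>)"
    by (simp add: norm_divide)
  also have "\<dots> \<le> M / (m / 2)"
  proof (rule frac_le)
    show "0 \<le> M" using upper norm_ge_zero order_trans by blast
    show "m / 2 \<le> cmod (dpair \<rho> \<xi> \<xi>)" using Re_a complex_Re_le_cmod order_trans by blast
  qed (use upper lower(1) in auto)
  also have "\<dots> = 2 * M / m" by simp
  also have "\<dots> < R" by (rule R)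
  finally show "cmod (dpair \<rho> \<xi> z / dpair \<rho> \<xi> \<xi>) < R" .
qed

theorem lemma2:
  fixes \<rho> :: "complex^'n \<Rightarrow> real"
  assumes C3: "C3 \<rho>"
    and bounded: "bounded {z. \<rho> z < 0}"
    and convex: "convex {z. \<rho> z < 0}"
    and zero_in: "\<rho> 0 < 0"
    and defining: "\<forall>x. \<rho> x = 0 \<longrightarrow> D1 \<rho> x \<noteq> (\<lambda>_. 0)"
    and strongly_convex: "\<forall>x. \<rho> x = 0 \<longrightarrow> (\<forall>v. v \<noteq> 0 \<longrightarrow> D2 \<rho> x v v > 0)"
    and sublevel: "\<exists>c>0. compact {z. \<rho> z \<le> c}"
  shows "\<exists>\<epsilon>0>0. \<forall>\<epsilon>. 0 < \<epsilon> \<and> \<epsilon> < \<epsilon>0 \<longrightarrow>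
           (\<exists>R>1. \<forall>\<xi> z. 0 \<le> \<rho> \<xi> \<and> \<rho> \<xi> < \<epsilon> \<and> \<rho> z < 0 \<longrightarrow>
              dpair \<rho> \<xi> z / dpair \<rho> \<xi> \<xi> \<in> L_dom R (pi / 2 - Arg (dpair \<rho> \<xi> \<xi>)))"
proof -
  obtain c where c: "0 < c" "compact {z. \<rho> z \<le> c}" using sublevel by blast
  obtain \<eta>1 where "0 < \<eta>1"
    and halfspace: "\<forall>\<xi> z. 0 \<le> \<rho> \<xi> \<longrightarrow> \<rho> \<xi> < \<eta>1 \<longrightarrow> \<rho> z < 0 \<longrightarrow> D1 \<rho> \<xi> (z - \<xi>) < 0"
    using domain_in_tangent_halfspace_near_boundary[OF C3 bounded convex zero_in defining strongly_convex c]
    by blast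
  obtain \<eta>2 m where "0 < \<eta>2" "0 < m"
    and lower: "\<forall>\<xi>. 0 \<le> \<rho> \<xi> \<longrightarrow> \<rho> \<xi> < \<eta>2 \<longrightarrow> m \<le> D1 \<rho> \<xi> \<xi>"
    using D1_diag_uniformly_pos_near_boundary[OF C3 zero_in c \<open>0 < \<eta>1\<close> halfspace] by blast
  obtain M where upper: "\<forall>\<xi>\<in>{z. \<rho> z \<le> c}. \<forall>z\<in>{z. \<rho> z \<le> c}. cmod (dpair \<rho> \<xi> z) \<le> M"
    using dpair_bounded_on_compact[OF C3 c(2)] by blast
  define R where "R = max 2 (2 * M / m + 1)"
  have "1 < R" "2 * M / m < R" by (auto simp: R_def less_max_iff_disj)
  have quotient: "dpair \<rho> \<xi> z / dpair \<rho> \<xi> \<xi> \<in> L_dom R (pi / 2 - Arg (dpair \<rho> \<xi> \<xi>))"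
    if "0 \<le> \<rho> \<xi>" "\<rho> \<xi> < min c (min \<eta>1 \<eta>2)" "\<rho> z < 0" for \<xi> z
    using that halfspace lower upper \<open>0 < m\<close> \<open>2 * M / m < R\<close>
    by (intro dpair_quotient_mem_L_dom[OF C3, where m = m and M = M]) auto
  show ?thesis
  proof (rule exI[of _ "min c (min \<eta>1 \<eta>2)"], intro conjI allI impI)
    show "0 < min c (min \<eta>1 \<eta>2)" using c \<open>0 < \<eta>1\<close> \<open>0 < \<eta>2\<close> by simp
    fix \<epsilon> assume "0 < \<epsilon> \<and> \<epsilon> < min c (min \<eta>1 \<eta>2)"
    with quotient \<open>1 < R\<close> show "\<exists>R>1. \<forall>\<xi> z. 0 \<le> \<rho> \<xi> \<and> \<rho> \<xi> < \<epsilon> \<and> \<rho> z < 0 \<longrightarrow>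
        dpair \<rho> \<xi> z / dpair \<rho> \<xi> \<xi> \<in> L_dom R (pi / 2 - Arg (dpair \<rho> \<xi> \<xi>))"
      by (intro exI[of _ R]) auto
  qed
qed

end
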